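(* Let $n\ge4$ and let $\eta$ be a homogeneous integrable 2-form of degree one on $\mathbb{C}^n$ with $d\eta\not\equiv0$. Then there exist linear coordinates $(x_1,\dots,x_n)$ on $\mathbb{C}^n$ such that $d\eta=dx_1\wedge dx_2\wedge dx_3$ and $\eta=\sum_{1\le i<j\le3}B_{ij}(x_1,x_2,x_3)\,dx_i\wedge dx_j$, where the $B_{ij}$ are linear forms depending only on $x_1,x_2,x_3$; more precisely $\eta=x_1\,dx_2\wedge dx_3+d\alpha$ with $\alpha=\sum_{j=1}^3A_j(x_1,x_2,x_3)\,dx_j$, $A_j$ homogeneous quadratic polynomials.
   Context: A form is homogeneous of degree $m$ if its coefficients (in linear coordinates) are homogeneous polynomials of degree $m$. A holomorphic $q$-form $\eta$ is integrable if every point $p$ outside its zero set has a neighborhood $V$ with holomorphic 1-forms $\omega_1,\dots,\omega_q$ on $V$ such that $\eta|_V=\omega_1\wedge\cdots\wedge\omega_q$ and $d\omega_j\wedge\eta=0$ for all $j$. *)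

theory Defs
  imports "HOL-Analysis.Analysis"
begin

text \<open>A k-form is represented by its evaluation: a function of the base point and
  k tangent vectors (alternating and multilinear in the tangent vectors).\<close>

text \<open>A homogeneous 2-form of degree one: eta = sum_{i<j} eta_ij dx_i ^ dx_j with
  eta_ij linear forms in x; evaluated, eta x u v = sum_{i,j} E_ij(x) u_i v_j with
  E antisymmetric, E_ij(x) = sum_k C i j k x_k.\<close>
definition form2_hom1 ::
  "(complex^'n \<Rightarrow> complex^'n \<Rightarrow> complex^'n \<Rightarrow> complex) \<Rightarrow> bool" where
  "form2_hom1 eta \<longleftrightarrow>
     (\<exists>C::'n \<Rightarrow> 'n \<Rightarrow> 'n \<Rightarrow> complex.
        (\<forall>i j k. C j i k = - C i j k) \<and>
        (\<forall>x u v. eta x u v =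
           (\<Sum>i\<in>UNIV. \<Sum>j\<in>UNIV. \<Sum>k\<in>UNIV. C i j k * x$k * u$i * v$j)))"

definition holo_on :: "(complex^'n) set \<Rightarrow> (complex^'n \<Rightarrow> complex) \<Rightarrow> bool" where
  "holo_on V f \<longleftrightarrow>
     (\<forall>x\<in>V. \<exists>D. (f has_derivative D) (at x) \<and> (\<forall>(c::complex) v. D (c *s v) = c * D v))"

definition one_form :: "('n \<Rightarrow> complex^'n \<Rightarrow> complex) \<Rightarrow> complex^'n \<Rightarrow> complex^'n \<Rightarrow> complex" where
  "one_form w x u = (\<Sum>i\<in>UNIV. w i x * u$i)"

definition ext_d1 ::
  "(complex^'n \<Rightarrow> complex^'n \<Rightarrow> complex) \<Rightarrow> complex^'n \<Rightarrow> complex^'n \<Rightarrow> complex^'n \<Rightarrow> complex" where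
  "ext_d1 F x u v =
     frechet_derivative (\<lambda>y. F y v) (at x) u - frechet_derivative (\<lambda>y. F y u) (at x) v"

definition ext_d2 ::
  "(complex^'n \<Rightarrow> complex^'n \<Rightarrow> complex^'n \<Rightarrow> complex) \<Rightarrow>
     complex^'n \<Rightarrow> complex^'n \<Rightarrow> complex^'n \<Rightarrow> complex^'n \<Rightarrow> complex" where
  "ext_d2 F x u v w =
     frechet_derivative (\<lambda>y. F y v w) (at x) u
   - frechet_derivative (\<lambda>y. F y u w) (at x) v
   + frechet_derivative (\<lambda>y. F y u v) (at x) w"

definition wedge11 ::
  "(complex^'n \<Rightarrow> complex^'n \<Rightarrow> complex) \<Rightarrow> (complex^'n \<Rightarrow> complex^'n \<Rightarrow> complex) \<Rightarrow>
     complex^'n \<Rightarrow> complex^'n \<Rightarrow> complex^'n \<Rightarrow> complex" where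
  "wedge11 a b x u v = a x u * b x v - a x v * b x u"

definition wedge22 ::
  "(complex^'n \<Rightarrow> complex^'n \<Rightarrow> complex^'n \<Rightarrow> complex) \<Rightarrow>
   (complex^'n \<Rightarrow> complex^'n \<Rightarrow> complex^'n \<Rightarrow> complex) \<Rightarrow>
     complex^'n \<Rightarrow> complex^'n \<Rightarrow> complex^'n \<Rightarrow> complex^'n \<Rightarrow> complex^'n \<Rightarrow> complex" where
  "wedge22 b e x u1 u2 u3 u4 =
       b x u1 u2 * e x u3 u4 - b x u1 u3 * e x u2 u4 + b x u1 u4 * e x u2 u3
     + b x u2 u3 * e x u1 u4 - b x u2 u4 * e x u1 u3 + b x u3 u4 * e x u1 u2"

definition wedge111 ::
  "(complex^'n \<Rightarrow> complex) \<Rightarrow> (complex^'n \<Rightarrow> complex) \<Rightarrow> (complex^'n \<Rightarrow> complex) \<Rightarrow>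
     complex^'n \<Rightarrow> complex^'n \<Rightarrow> complex^'n \<Rightarrow> complex" where
  "wedge111 a b c u v w =
       a u * b v * c w - a u * b w * c v - a v * b u * c w
     + a v * b w * c u + a w * b u * c v - a w * b v * c u"

definition integrable2 ::
  "(complex^'n \<Rightarrow> complex^'n \<Rightarrow> complex^'n \<Rightarrow> complex) \<Rightarrow> bool" where
  "integrable2 eta \<longleftrightarrow>
     (\<forall>p. (\<exists>u v. eta p u v \<noteq> 0) \<longrightarrow>
        (\<exists>V w1 w2. open V \<and> p \<in> V \<and>
           (\<forall>i. holo_on V (w1 i)) \<and> (\<forall>i. holo_on V (w2 i)) \<and>
           (\<forall>x\<in>V. \<forall>u v. eta x u v = wedge11 (one_form w1) (one_form w2) x u v) \<and>
           (\<forall>x\<in>V. \<forall>u1 u2 u3 u4. wedge22 (ext_d1 (one_form w1)) eta x u1 u2 u3 u4 = 0) \<and>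
           (\<forall>x\<in>V. \<forall>u1 u2 u3 u4. wedge22 (ext_d1 (one_form w2)) eta x u1 u2 u3 u4 = 0)))"

definition lincoord :: "complex^'n^'n \<Rightarrow> 'n \<Rightarrow> complex^'n \<Rightarrow> complex" where
  "lincoord P i x = (P *v x) $ i"

end

theory Submission
  imports Defs
begin

text \<open>
  At a point \<open>p\<close> where \<open>\<eta>\<close> does not vanish, integrability writes \<open>\<eta> = \<omega>\<^sub>1 \<and> \<omega>\<^sub>2\<close> near \<open>p\<close>
  with \<open>d\<omega>\<^sub>i \<and> \<eta> = 0\<close>. Since \<open>\<eta>\<close> is linear in the base point it is its own derivative, so
  differentiating \<open>\<omega>\<^sub>1 \<and> \<omega>\<^sub>2\<close> at \<open>p\<close> turns the integrability condition into
  \<open>d\<eta> \<and> \<omega>\<^sub>i(p) = 0\<close> for the constant 3-form \<open>d\<eta>\<close>. A 3-form annihilated in this way by two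
  independent covectors \<open>a, b\<close> is \<open>a \<and> b \<and> c\<close>, so \<open>d\<eta> = E\<^sub>1 \<and> E\<^sub>2 \<and> E\<^sub>3\<close>. Running the same
  argument at every point puts each \<open>\<eta>(x)\<close> into the exterior square of \<open>span {E\<^sub>i}\<close>, and
  \<open>\<eta>(y, T\<^sub>i, T\<^sub>j) = d\<eta>(y, T\<^sub>i, T\<^sub>j) + \<eta>(T\<^sub>i, y, T\<^sub>j) - \<eta>(T\<^sub>j, y, T\<^sub>i)\<close> vanishes on the common kernel
  of the \<open>E\<^sub>i\<close>, so the coefficients depend on \<open>E\<^sub>1, E\<^sub>2, E\<^sub>3\<close> only. Completing the \<open>E\<^sub>i\<close> to linear
  coordinates gives the normal form. Finally \<open>\<eta> - E\<^sub>1 dE\<^sub>2 \<and> dE\<^sub>3\<close> is closed with linear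
  coefficients, hence the differential of a third of its contraction with the Euler field.
\<close>

abbreviation clinear :: "(complex^'n \<Rightarrow> complex) \<Rightarrow> bool" where
  "clinear \<equiv> Vector_Spaces.linear (*s) (*)"

lemma clinearI:
  assumes "\<And>u v. f (u + v) = f u + f v" and "\<And>c u. f (c *s u) = c * f u"
  shows "clinear f"
  using assms vec.module_axioms vector_space_over_itself.module_axioms
  by (simp add: linear_iff_module_hom module_hom_iff)

lemma
  assumes "clinear f"
  shows clinear_add: "f (u + v) = f u + f v"
    and clinear_diff: "f (u - v) = f u - f v"
    and clinear_scale: "f (c *s u) = c * f u"
    and clinear_sum: "f (sum g A) = (\<Sum>i\<in>A. f (g i))"
  using assms
  by (simp_all add: linear_iff_module_hom module_hom.add module_hom.diff module_hom.scale module_hom.sum)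

lemma clinear_coordinates: "clinear f \<Longrightarrow> f x = (\<Sum>j\<in>UNIV. f (axis j 1) * x$j)"
  by (subst basis_expansion[symmetric, of x]) (simp add: clinear_sum clinear_scale mult.commute)

lemma clinear_imp_bounded_linear:
  assumes "clinear f"
  shows "bounded_linear f"
proof -
  have scaleR_eq: "r *\<^sub>R x = complex_of_real r *s x" for r and x :: "complex^'n"
    by (auto simp: vec_eq_iff scaleR_conv_of_real[where 'a=complex])
  have "linear f"
    by (intro linearI)
      (simp_all add: clinear_add clinear_scale assms scaleR_eq scaleR_conv_of_real[where 'a=complex])
  then show ?thesis by (simp add: linear_conv_bounded_linear)
qed

lemma clinear_has_derivative: "clinear f \<Longrightarrow> (f has_derivative f) F"
  by (simp add: bounded_linear_imp_has_derivative clinear_imp_bounded_linear)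

lemma frechet_derivative_clinear: "clinear f \<Longrightarrow> frechet_derivative f (at x) = f"
  by (metis clinear_has_derivative frechet_derivative_at)

lemma has_derivative_diagonal:
  fixes B :: "complex^'n \<Rightarrow> complex^'n \<Rightarrow> complex"
  assumes "\<And>y. clinear (\<lambda>x. B x y)" and "\<And>x. clinear (\<lambda>y. B x y)"
  shows "((\<lambda>y. B y y) has_derivative (\<lambda>h. B h x + B x h)) (at x)"
proof -
  have "bilinear B"
    unfolding bilinear_def
    using assms by (simp add: clinear_imp_bounded_linear bounded_linear.linear)
  then have "bounded_bilinear B"
    by (simp add: bilinear_conv_bounded_bilinear)
  then have "((\<lambda>y. B y y) has_derivative (\<lambda>h. B x h + B h x)) (at x)"
    by (rule bounded_bilinear.FDERIV[OF _ has_derivative_ident has_derivative_ident])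
  then show ?thesis by (simp add: add.commute)
qed

lemma clinear_one_form: "clinear (one_form w p)"
  by (rule clinearI)
    (simp_all add: one_form_def distrib_left sum.distrib sum_distrib_left mult.left_commute)

lemma clinear_lincoord: "clinear (lincoord P k)"
  by (rule clinearI)
    (simp_all add: lincoord_def matrix_vector_mult_def distrib_left sum.distrib sum_distrib_left
      mult.left_commute)

lemma lincoord_eq_clinear:
  assumes "clinear f" and "P$k = (\<chi> j. f (axis j 1))"
  shows "lincoord P k = f"
proof
  fix x
  show "lincoord P k x = f x"
    using assms(2) clinear_coordinates[OF assms(1), of x]
    by (simp add: lincoord_def matrix_vector_mult_def)
qed

section \<open>Invertible matrices with prescribed rows\<close>

lemma independent_family_inj_on:
  fixes r :: "'i \<Rightarrow> 'a::field^'n"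
  assumes "finite S" and indep: "\<And>c. (\<Sum>i\<in>S. c i *s r i) = 0 \<Longrightarrow> \<forall>i\<in>S. c i = 0"
  shows "inj_on r S"
proof (rule inj_onI, rule ccontr)
  fix i j assume ij: "i \<in> S" "j \<in> S" "r i = r j" "i \<noteq> j"
  define c where "c k = (if k = i then 1 else if k = j then -1 else (0::'a))" for k
  have "(\<Sum>k\<in>S. c k *s r k) = (\<Sum>k\<in>S. (if k = i then r i else 0) - (if k = j then r j else 0))"
    using ij(4) by (intro sum.cong) (auto simp: c_def)
  also have "\<dots> = 0"
    using ij assms(1) by (simp add: sum_subtractf)
  finally have "\<forall>k\<in>S. c k = 0"
    by (rule indep)
  then have "c i = 0"
    using ij(1) by blast
  then show False
    by (simp add: c_def)
qed

lemma independent_family_independent_image: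
  fixes r :: "'i \<Rightarrow> 'a::field^'n"
  assumes "finite S" and indep: "\<And>c. (\<Sum>i\<in>S. c i *s r i) = 0 \<Longrightarrow> \<forall>i\<in>S. c i = 0"
  shows "vec.independent (r ` S)"
  unfolding vec.independent_explicit
proof (intro conjI allI impI ballI)
  show "finite (r ` S)" using assms(1) by simp
next
  fix u v assume u: "(\<Sum>v\<in>r ` S. u v *s v) = 0" and v: "v \<in> r ` S"
  have "(\<Sum>i\<in>S. u (r i) *s r i) = (\<Sum>v\<in>r ` S. u v *s v)"
    by (simp add: sum.reindex[OF independent_family_inj_on[OF assms]])
  then have "\<forall>i\<in>S. u (r i) = 0"
    using u indep by simp
  then show "u v = 0" using v by blast
qed

lemma exists_invertible_with_rows:
  fixes r :: "'n \<Rightarrow> 'a::field^'n"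
  assumes indep: "\<And>c. (\<Sum>i\<in>S. c i *s r i) = 0 \<Longrightarrow> \<forall>i\<in>S. c i = 0"
  obtains P :: "'a^'n^'n" where "invertible P" and "\<And>i. i \<in> S \<Longrightarrow> P$i = r i"
proof -
  have inj: "inj_on r S" and indep_image: "vec.independent (r ` S)"
    using independent_family_inj_on[OF finite indep]
      independent_family_independent_image[OF finite indep] by blast+
  obtain B where rB: "r ` S \<subseteq> B" and indep_B: "vec.independent B" and span_B: "UNIV \<subseteq> vec.span B"
    by (rule vec.maximal_independent_subset_extend[OF subset_UNIV indep_image])
  have "finite B"
    using indep_B vec.independent_bound_general by blast
  have "card B = CARD('n)"
    using vec.basis_card_eq_dim[of B UNIV] indep_B span_B vec_dim_card by auto
  then have "card (UNIV - S) = card (B - r ` S)"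
    using rB \<open>finite B\<close> card_image[OF inj]
    by (simp add: card_Diff_subset card_Diff_subset[of S UNIV] finite_subset)
  then obtain h where h: "bij_betw h (UNIV - S) (B - r ` S)"
    using finite_same_card_bij[of "UNIV - S" "B - r ` S"] \<open>finite B\<close> by auto
  define P where "P = (\<chi> i. if i \<in> S then r i else h i)"
  have "B \<subseteq> rows P"
  proof
    fix x assume "x \<in> B"
    show "x \<in> rows P"
    proof (cases "x \<in> r ` S")
      case True then show ?thesis by (auto simp: rows_def row_def P_def)
    next
      case False
      with \<open>x \<in> B\<close> have "x \<in> h ` (UNIV - S)"
        using h by (simp add: bij_betw_def)
      then obtain i where "i \<notin> S" "x = h i"
        by blast
      then show ?thesis by (auto simp: rows_def row_def P_def)
    qed
  qed
  then have "vec.span (rows P) = UNIV"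
    using span_B vec.span_mono by blast
  then have "\<exists>P'. P' ** P = mat 1"
    by (simp add: matrix_left_invertible_span_rows_gen)
  then have "invertible P"
    using matrix_left_right_inverse invertible_def by blast
  then show ?thesis
    using that by (simp add: P_def)
qed

section \<open>Two-forms with linear coefficients\<close>

lemma
  fixes eta :: "complex^'n \<Rightarrow> complex^'n \<Rightarrow> complex^'n \<Rightarrow> complex"
  assumes "form2_hom1 eta"
  shows form2_hom1_linear_point: "clinear (\<lambda>x. eta x u v)"
    and form2_hom1_linear_fst: "clinear (\<lambda>u. eta x u v)"
    and form2_hom1_linear_snd: "clinear (\<lambda>v. eta x u v)"
    and form2_hom1_antisym: "eta x v u = - eta x u v"
proof -
  obtain C :: "'n \<Rightarrow> 'n \<Rightarrow> 'n \<Rightarrow> complex" where C_antisym: "\<And>i j k. C j i k = - C i j k"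
    and eta: "\<And>x u v. eta x u v = (\<Sum>i\<in>UNIV. \<Sum>j\<in>UNIV. \<Sum>k\<in>UNIV. C i j k * x$k * u$i * v$j)"
    using assms unfolding form2_hom1_def by blast
  show "clinear (\<lambda>x. eta x u v)" "clinear (\<lambda>u. eta x u v)" "clinear (\<lambda>v. eta x u v)"
    by (rule clinearI; simp add: eta sum.distrib sum_distrib_left distrib_left distrib_right mult_ac)+
  have "C i j k * x$k * v$i * u$j = - (C j i k * x$k * u$j * v$i)" for i j k
    by (simp add: C_antisym[of j i k] mult_ac)
  then have "eta x v u = - (\<Sum>i\<in>UNIV. \<Sum>j\<in>UNIV. \<Sum>k\<in>UNIV. C j i k * x$k * u$j * v$i)"
    unfolding eta by (simp add: sum_negf)
  also have "\<dots> = - eta x u v"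
    unfolding eta by (subst sum.swap) simp
  finally show "eta x v u = - eta x u v" .
qed

definition hom1_d2 :: "('v \<Rightarrow> 'v \<Rightarrow> 'v \<Rightarrow> complex) \<Rightarrow> 'v \<Rightarrow> 'v \<Rightarrow> 'v \<Rightarrow> complex" where
  "hom1_d2 eta u v w = eta u v w - eta v u w + eta w u v"

lemma ext_d2_form2_hom1: "form2_hom1 eta \<Longrightarrow> ext_d2 eta x u v w = hom1_d2 eta u v w"
  by (simp add: ext_d2_def hom1_d2_def frechet_derivative_clinear form2_hom1_linear_point)

lemma
  assumes "form2_hom1 eta"
  shows hom1_d2_swap12: "hom1_d2 eta v u w = - hom1_d2 eta u v w"
    and hom1_d2_swap23: "hom1_d2 eta u w v = - hom1_d2 eta u v w"
  using form2_hom1_antisym[OF assms, of w u v] form2_hom1_antisym[OF assms, of u v w]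
    form2_hom1_antisym[OF assms, of v u w]
  by (simp_all add: hom1_d2_def)

lemma clinear_hom1_d2:
  assumes "form2_hom1 eta"
  shows "clinear (hom1_d2 eta u v)"
  using clinear_add[OF form2_hom1_linear_point[OF assms]] clinear_add[OF form2_hom1_linear_snd[OF assms]]
    clinear_scale[OF form2_hom1_linear_point[OF assms]] clinear_scale[OF form2_hom1_linear_snd[OF assms]]
  by (intro clinearI) (simp_all add: hom1_d2_def algebra_simps)

text \<open>A closed 2-form whose coefficients are linear is \<open>d\<close> of \<open>1/3\<close> its contraction with the
  Euler field \<open>x\<close>: the Poincar\'e homotopy formula for a form of total degree three.\<close>
lemma ext_d1_euler_contraction:
  fixes beta :: "complex^'n \<Rightarrow> complex^'n \<Rightarrow> complex^'n \<Rightarrow> complex"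
  assumes lin_point: "\<And>u v. clinear (\<lambda>x. beta x u v)" and lin_fst: "\<And>x v. clinear (\<lambda>u. beta x u v)"
    and antisym: "\<And>x u v. beta x v u = - beta x u v"
    and closed: "\<And>u v w. hom1_d2 beta u v w = 0"
  shows "ext_d1 (\<lambda>x u. beta x x u / 3) x u v = beta x u v"
proof -
  have deriv: "((\<lambda>y. beta y y w / 3) has_derivative (\<lambda>h. (beta h x w + beta x h w) / 3)) (at x)" for w
    using has_derivative_diagonal[of "\<lambda>y z. beta y z w" x] lin_point lin_fst
    by (intro bounded_linear.has_derivative[OF bounded_linear_divide]) blast+
  have "ext_d1 (\<lambda>x u. beta x x u / 3) x u v =
      (beta u x v + beta x u v) / 3 - (beta v x u + beta x v u) / 3"
    unfolding ext_d1_def frechet_derivative_at[OF deriv, symmetric] ..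
  also have "\<dots> = beta x u v"
    using closed[of x u v] antisym[of x u v] by (simp add: hom1_d2_def field_simps)
  finally show ?thesis .
qed

definition wedge31 ::
  "('v \<Rightarrow> 'v \<Rightarrow> 'v \<Rightarrow> complex) \<Rightarrow> ('v \<Rightarrow> complex) \<Rightarrow> 'v \<Rightarrow> 'v \<Rightarrow> 'v \<Rightarrow> 'v \<Rightarrow> complex" where
  "wedge31 Om a u1 u2 u3 u4 =
     Om u1 u2 u3 * a u4 - Om u1 u2 u4 * a u3 + Om u1 u3 u4 * a u2 - Om u2 u3 u4 * a u1"

text \<open>If \<open>eta\<close> is the derivative at \<open>p\<close> of \<open>\<omega>\<^sub>1 \<and> \<omega>\<^sub>2\<close>, where \<open>\<omega>\<^sub>1(p) = a\<close>,
  \<open>D\<omega>\<^sub>1(p) = A\<close>, \<open>\<omega>\<^sub>2(p) = b\<close>, \<open>D\<omega>\<^sub>2(p) = B\<close>, then \<open>d\<eta> \<and> \<omega>\<^sub>i = - d\<omega>\<^sub>i \<and> \<eta>\<close> at \<open>p\<close>.\<close>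
lemma wedge31_hom1_d2_wedge11:
  fixes a b :: "complex^'n \<Rightarrow> complex" and A B :: "complex^'n \<Rightarrow> complex^'n \<Rightarrow> complex"
  assumes eta: "\<And>h v w. eta h v w = a v * B h w + A h v * b w - a w * B h v - A h w * b v"
  shows "wedge31 (hom1_d2 eta) a u1 u2 u3 u4 =
           - wedge22 (\<lambda>_ u v. A u v - A v u) (\<lambda>_ u v. a u * b v - a v * b u) p u1 u2 u3 u4"
    and "wedge31 (hom1_d2 eta) b u1 u2 u3 u4 =
           - wedge22 (\<lambda>_ u v. B u v - B v u) (\<lambda>_ u v. a u * b v - a v * b u) p u1 u2 u3 u4"
  unfolding wedge31_def wedge22_def hom1_d2_def eta by algebra+

lemma wedge11_nonzero_dual:
  assumes "clinear a" and "clinear b" and nz: "a u * b v - a v * b u \<noteq> 0"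
  obtains t s where "a t = 1" "b t = 0" "a s = 0" "b s = 1"
proof
  define d where "d = a u * b v - a v * b u"
  have "d \<noteq> 0"
    using nz by (simp add: d_def)
  then show "a ((b v / d) *s u - (b u / d) *s v) = 1" "b ((b v / d) *s u - (b u / d) *s v) = 0"
    "a ((a u / d) *s v - (a v / d) *s u) = 0" "b ((a u / d) *s v - (a v / d) *s u) = 1"
    using assms(1,2) by (simp_all add: clinear_diff clinear_scale field_simps) (simp_all add: d_def)
qed

lemma wedge31_zero_imp_wedge111:
  fixes Om :: "complex^'n \<Rightarrow> complex^'n \<Rightarrow> complex^'n \<Rightarrow> complex"
  assumes swap12: "\<And>u v w. Om v u w = - Om u v w" and swap23: "\<And>u v w. Om u w v = - Om u v w"
    and wedge_a: "\<And>u1 u2 u3 u4. wedge31 Om a u1 u2 u3 u4 = 0"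
    and wedge_b: "\<And>u1 u2 u3 u4. wedge31 Om b u1 u2 u3 u4 = 0"
    and dual: "a t = 1" "b t = 0" "a s = 0" "b s = 1"
  shows "Om u v w = wedge111 a b (Om t s) u v w"
proof -
  have cyclic: "Om x t s = Om t s x" for x
    using swap12[of t x s] swap23[of t s x] by simp
  have via_t: "Om x y t = Om t s y * b x - Om t s x * b y" for x y
    using wedge_b[of x y t s] dual cyclic[of x] cyclic[of y] by (simp add: wedge31_def algebra_simps)
  have "Om u v w = Om u v t * a w - Om u w t * a v + Om v w t * a u"
    using wedge_a[of u v w t] dual by (simp add: wedge31_def algebra_simps)
  then show ?thesis
    unfolding via_t wedge111_def by (simp add: algebra_simps)
qed

section \<open>Integrability at a point\<close>

lemma holo_on_one_form_has_derivative:
  fixes w :: "'n \<Rightarrow> complex^'n \<Rightarrow> complex"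
  assumes "\<And>i. holo_on V (w i)" and "p \<in> V"
  obtains A where "\<And>v. ((\<lambda>y. one_form w y v) has_derivative (\<lambda>h. A h v)) (at p)"
    and "\<And>u v. ext_d1 (one_form w) p u v = A u v - A v u"
proof -
  have "\<forall>i. \<exists>D. (w i has_derivative D) (at p)"
    using assms unfolding holo_on_def by blast
  then obtain D where D: "\<And>i. (w i has_derivative D i) (at p)"
    by metis
  define A where "A h v = (\<Sum>i\<in>UNIV. D i h * v$i)" for h v :: "complex^'n"
  have deriv: "((\<lambda>y. one_form w y v) has_derivative (\<lambda>h. A h v)) (at p)" for v
    unfolding one_form_def A_def by (intro has_derivative_sum has_derivative_mult_left D)
  moreover have "ext_d1 (one_form w) p u v = A u v - A v u" for u v
    unfolding ext_d1_def frechet_derivative_at[OF deriv, symmetric] ..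
  ultimately show ?thesis by (rule that)
qed

lemma form2_hom1_eq_derivative_wedge11:
  fixes eta :: "complex^'n \<Rightarrow> complex^'n \<Rightarrow> complex^'n \<Rightarrow> complex"
  assumes hom: "form2_hom1 eta" and V: "open V" "p \<in> V"
    and eq: "\<And>x u v. x \<in> V \<Longrightarrow> eta x u v = wedge11 F G x u v"
    and dF: "\<And>v. ((\<lambda>y. F y v) has_derivative (\<lambda>h. A h v)) (at p)"
    and dG: "\<And>v. ((\<lambda>y. G y v) has_derivative (\<lambda>h. B h v)) (at p)"
  shows "eta h v w = F p v * B h w + A h v * G p w - F p w * B h v - A h w * G p v"
proof -
  have "((\<lambda>y. wedge11 F G y v w) has_derivative
      (\<lambda>h. F p v * B h w + A h v * G p w - (F p w * B h v + A h w * G p v))) (at p)"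
    unfolding wedge11_def by (intro has_derivative_diff has_derivative_mult dF dG)
  then have "((\<lambda>y. eta y v w) has_derivative
      (\<lambda>h. F p v * B h w + A h v * G p w - (F p w * B h v + A h w * G p v))) (at p)"
    by (rule has_derivative_transform_within_open[OF _ V]) (simp add: eq)
  then have "(\<lambda>h. eta h v w) = (\<lambda>h. F p v * B h w + A h v * G p w - (F p w * B h v + A h w * G p v))"
    using has_derivative_unique clinear_has_derivative[OF form2_hom1_linear_point[OF hom]]
    by blast
  then show ?thesis
    by (simp add: fun_eq_iff)
qed

lemma integrable2_wedge31_zero:
  fixes eta :: "complex^'n \<Rightarrow> complex^'n \<Rightarrow> complex^'n \<Rightarrow> complex"
  assumes hom: "form2_hom1 eta" and int: "integrable2 eta" and ne: "eta p u0 v0 \<noteq> 0"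
  obtains a b where "clinear a" "clinear b" "\<And>u v. eta p u v = a u * b v - a v * b u"
    and "\<And>u1 u2 u3 u4. wedge31 (hom1_d2 eta) a u1 u2 u3 u4 = 0"
    and "\<And>u1 u2 u3 u4. wedge31 (hom1_d2 eta) b u1 u2 u3 u4 = 0"
proof -
  have "\<exists>u v. eta p u v \<noteq> 0"
    using ne by blast
  obtain V w1 w2 where V: "open V" "p \<in> V"
    and holo: "\<forall>i. holo_on V (w1 i)" "\<forall>i. holo_on V (w2 i)"
    and eq: "\<forall>x\<in>V. \<forall>u v. eta x u v = wedge11 (one_form w1) (one_form w2) x u v"
    and int1: "\<forall>x\<in>V. \<forall>u1 u2 u3 u4. wedge22 (ext_d1 (one_form w1)) eta x u1 u2 u3 u4 = 0"
    and int2: "\<forall>x\<in>V. \<forall>u1 u2 u3 u4. wedge22 (ext_d1 (one_form w2)) eta x u1 u2 u3 u4 = 0"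
    using int[unfolded integrable2_def, rule_format, OF \<open>\<exists>u v. eta p u v \<noteq> 0\<close>] by blast
  obtain A where dA: "\<And>v. ((\<lambda>y. one_form w1 y v) has_derivative (\<lambda>h. A h v)) (at p)"
    and d1: "\<And>u v. ext_d1 (one_form w1) p u v = A u v - A v u"
    by (rule holo_on_one_form_has_derivative[of V w1, OF holo(1)[rule_format] V(2)]) (rule that)
  obtain B where dB: "\<And>v. ((\<lambda>y. one_form w2 y v) has_derivative (\<lambda>h. B h v)) (at p)"
    and d2: "\<And>u v. ext_d1 (one_form w2) p u v = B u v - B v u"
    by (rule holo_on_one_form_has_derivative[of V w2, OF holo(2)[rule_format] V(2)]) (rule that)
  define a where "a = one_form w1 p"
  define b where "b = one_form w2 p"
  have eta_p: "eta p u v = a u * b v - a v * b u" for u v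
    using eq V(2) by (simp add: wedge11_def a_def b_def)
  have eta_eq: "eta h v w = a v * B h w + A h v * b w - a w * B h v - A h w * b v" for h v w
    unfolding a_def b_def
    by (rule form2_hom1_eq_derivative_wedge11[OF hom V _ dA dB]) (use eq in blast)
  note dwedge = wedge31_hom1_d2_wedge11[OF eta_eq, where p=p]
  show ?thesis
  proof
    show "clinear a" "clinear b"
      unfolding a_def b_def by (rule clinear_one_form)+
    show "eta p u v = a u * b v - a v * b u" for u v
      by (rule eta_p)
    show "wedge31 (hom1_d2 eta) a u1 u2 u3 u4 = 0" "wedge31 (hom1_d2 eta) b u1 u2 u3 u4 = 0"
      for u1 u2 u3 u4
      using int1[rule_format, OF V(2), of u1 u2 u3 u4] int2[rule_format, OF V(2), of u1 u2 u3 u4]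
      unfolding dwedge wedge22_def d1 d2 eta_p by simp_all
  qed
qed

section \<open>Coframes of three covectors\<close>

locale coframe3 =
  fixes \<alpha> \<beta> \<gamma> :: "'n::finite"
    and E :: "'n \<Rightarrow> complex^'n \<Rightarrow> complex" and T :: "'n \<Rightarrow> complex^'n"
  assumes distinct: "distinct [\<alpha>, \<beta>, \<gamma>]"
    and clinear: "\<And>k. clinear (E k)"
    and dual: "\<And>i j. i \<in> {\<alpha>, \<beta>, \<gamma>} \<Longrightarrow> j \<in> {\<alpha>, \<beta>, \<gamma>} \<Longrightarrow>
      E i (T j) = (if i = j then 1 else 0)"
begin

lemma sum_coframe: "(\<Sum>k\<in>{\<alpha>, \<beta>, \<gamma>}. f k) = f \<alpha> + f \<beta> + f \<gamma>"
  using distinct by (simp add: add.assoc)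

lemma dual_simps [simp]:
  "E \<alpha> (T \<alpha>) = 1" "E \<alpha> (T \<beta>) = 0" "E \<alpha> (T \<gamma>) = 0"
  "E \<beta> (T \<alpha>) = 0" "E \<beta> (T \<beta>) = 1" "E \<beta> (T \<gamma>) = 0"
  "E \<gamma> (T \<alpha>) = 0" "E \<gamma> (T \<beta>) = 0" "E \<gamma> (T \<gamma>) = 1"
  using dual distinct by auto

lemma wedge31_zero_imp_span:
  assumes Om: "\<And>u v w. Om u v w = wedge111 (E \<alpha>) (E \<beta>) (E \<gamma>) u v w"
    and wedge_a: "\<And>u1 u2 u3 u4. wedge31 Om a u1 u2 u3 u4 = 0"
  shows "a u = (\<Sum>k\<in>{\<alpha>, \<beta>, \<gamma>}. a (T k) * E k u)"
  using wedge_a[of "T \<alpha>" "T \<beta>" "T \<gamma>" u]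
  by (simp add: wedge31_def Om wedge111_def sum_coframe algebra_simps)

lemma form2_hom1_point_coordinates:
  fixes eta :: "complex^'n \<Rightarrow> complex^'n \<Rightarrow> complex^'n \<Rightarrow> complex"
  assumes hom: "form2_hom1 eta" and int: "integrable2 eta"
    and d: "\<And>u v w. hom1_d2 eta u v w = wedge111 (E \<alpha>) (E \<beta>) (E \<gamma>) u v w"
  shows "eta x u v = (\<Sum>i\<in>{\<alpha>, \<beta>, \<gamma>}. \<Sum>j\<in>{\<alpha>, \<beta>, \<gamma>}. eta x (T i) (T j) * E i u * E j v)"
proof (cases "\<exists>u v. eta x u v \<noteq> 0")
  case False
  then show ?thesis by simp
next
  case True
  then obtain u0 v0 where "eta x u0 v0 \<noteq> 0" by blast
  from integrable2_wedge31_zero[OF hom int this] obtain a b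
    where eta_x: "\<And>u v. eta x u v = a u * b v - a v * b u"
      and wedge_a: "\<And>u1 u2 u3 u4. wedge31 (hom1_d2 eta) a u1 u2 u3 u4 = 0"
      and wedge_b: "\<And>u1 u2 u3 u4. wedge31 (hom1_d2 eta) b u1 u2 u3 u4 = 0"
    by metis
  show ?thesis
    unfolding sum_coframe eta_x
      wedge31_zero_imp_span[OF d wedge_a, of u] wedge31_zero_imp_span[OF d wedge_a, of v]
      wedge31_zero_imp_span[OF d wedge_b, of u] wedge31_zero_imp_span[OF d wedge_b, of v]
    by (simp add: sum_coframe algebra_simps)
qed

lemma form2_hom1_coordinates:
  fixes eta :: "complex^'n \<Rightarrow> complex^'n \<Rightarrow> complex^'n \<Rightarrow> complex"
  assumes hom: "form2_hom1 eta" and int: "integrable2 eta"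
    and d: "\<And>u v w. hom1_d2 eta u v w = wedge111 (E \<alpha>) (E \<beta>) (E \<gamma>) u v w"
  shows "eta x u v = (\<Sum>i\<in>{\<alpha>, \<beta>, \<gamma>}. \<Sum>j\<in>{\<alpha>, \<beta>, \<gamma>}.
           (\<Sum>k\<in>{\<alpha>, \<beta>, \<gamma>}. eta (T k) (T i) (T j) * E k x) * E i u * E j v)"
proof -
  note point = form2_hom1_point_coordinates[OF hom int d]
  define y where "y = x - (\<Sum>k\<in>{\<alpha>, \<beta>, \<gamma>}. E k x *s T k)"
  have E_y: "E m y = 0" if "m \<in> {\<alpha>, \<beta>, \<gamma>}" for m
    unfolding y_def clinear_diff[OF clinear] clinear_sum[OF clinear] clinear_scale[OF clinear]
    using that by (auto simp: sum_coframe)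
  have "eta y (T i) (T j) = 0" for i j
  proof -
    have "eta (T i) y (T j) = 0" "eta (T j) y (T i) = 0" "hom1_d2 eta y (T i) (T j) = 0"
      by (simp_all add: point[of "T i" y] point[of "T j" y] sum_coframe E_y d wedge111_def)
    then show ?thesis by (simp add: hom1_d2_def)
  qed
  moreover have "eta y (T i) (T j) =
      eta x (T i) (T j) - (\<Sum>k\<in>{\<alpha>, \<beta>, \<gamma>}. eta (T k) (T i) (T j) * E k x)" for i j
  proof -
    note lin = form2_hom1_linear_point[OF hom, of "T i" "T j"]
    show ?thesis
      unfolding y_def clinear_diff[OF lin] clinear_sum[OF lin] clinear_scale[OF lin]
      by (simp add: mult.commute)
  qed
  ultimately have "eta x (T i) (T j) = (\<Sum>k\<in>{\<alpha>, \<beta>, \<gamma>}. eta (T k) (T i) (T j) * E k x)" for i j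
    by (metis eq_iff_diff_eq_0)
  then show ?thesis
    by (simp add: point[of x u v])
qed

lemma form2_hom1_exact_remainder:
  fixes eta :: "complex^'n \<Rightarrow> complex^'n \<Rightarrow> complex^'n \<Rightarrow> complex"
  assumes hom: "form2_hom1 eta" and int: "integrable2 eta"
    and d: "\<And>u v w. hom1_d2 eta u v w = wedge111 (E \<alpha>) (E \<beta>) (E \<gamma>) u v w"
  shows "\<exists>Q. \<forall>x u v. eta x u v = E \<alpha> x * (E \<beta> u * E \<gamma> v - E \<beta> v * E \<gamma> u)
      + ext_d1 (\<lambda>x' u'. \<Sum>j\<in>{\<alpha>, \<beta>, \<gamma>}.
          (\<Sum>k\<in>{\<alpha>, \<beta>, \<gamma>}. \<Sum>l\<in>{\<alpha>, \<beta>, \<gamma>}. Q j k l * E k x' * E l x') * E j u') x u v"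
proof -
  define beta where "beta x u v = eta x u v - E \<alpha> x * (E \<beta> u * E \<gamma> v - E \<beta> v * E \<gamma> u)" for x u v
  define Q where "Q j k l = beta (T k) (T l) (T j) / 3" for j k l
  have "clinear (\<lambda>x. beta x u v)" for u v
    using clinear_add[OF form2_hom1_linear_point[OF hom]] clinear_scale[OF form2_hom1_linear_point[OF hom]]
      clinear_add[OF clinear] clinear_scale[OF clinear]
    by (intro clinearI) (simp_all add: beta_def algebra_simps)
  moreover have "clinear (\<lambda>u. beta x u v)" for x v
    using clinear_add[OF form2_hom1_linear_fst[OF hom]] clinear_scale[OF form2_hom1_linear_fst[OF hom]]
      clinear_add[OF clinear] clinear_scale[OF clinear]
    by (intro clinearI) (simp_all add: beta_def algebra_simps)
  moreover have "beta x v u = - beta x u v" for x u v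
    using form2_hom1_antisym[OF hom, of x v u] by (simp add: beta_def algebra_simps)
  moreover have "hom1_d2 beta u v w = 0" for u v w
    using d[of u v w] by (simp add: hom1_d2_def beta_def wedge111_def algebra_simps)
  ultimately have exact: "ext_d1 (\<lambda>x u. beta x x u / 3) x u v = beta x u v" for x u v
    by (rule ext_d1_euler_contraction)
  have coordinates: "beta x y u = (\<Sum>j\<in>{\<alpha>, \<beta>, \<gamma>}. \<Sum>k\<in>{\<alpha>, \<beta>, \<gamma>}. \<Sum>l\<in>{\<alpha>, \<beta>, \<gamma>}.
      beta (T k) (T l) (T j) * E k x * E l y * E j u)" for x y u
    unfolding beta_def form2_hom1_coordinates[OF hom int d, of x y u] sum_coframe
    by (simp add: algebra_simps)
  have "(\<Sum>j\<in>{\<alpha>, \<beta>, \<gamma>}.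
        (\<Sum>k\<in>{\<alpha>, \<beta>, \<gamma>}. \<Sum>l\<in>{\<alpha>, \<beta>, \<gamma>}. Q j k l * E k x * E l x) * E j u)
      = beta x x u / 3" for x u
    unfolding coordinates[of x x u] Q_def sum_coframe by (simp add: field_simps)
  then have contraction: "(\<lambda>x' u'. \<Sum>j\<in>{\<alpha>, \<beta>, \<gamma>}.
        (\<Sum>k\<in>{\<alpha>, \<beta>, \<gamma>}. \<Sum>l\<in>{\<alpha>, \<beta>, \<gamma>}. Q j k l * E k x' * E l x') * E j u')
      = (\<lambda>x u. beta x x u / 3)"
    by (simp add: fun_eq_iff)
  show ?thesis
    by (intro exI[of _ Q] allI) (simp only: contraction exact, simp add: beta_def)
qed

lemma exists_invertible_lincoord:
  obtains P :: "complex^'n^'n" where "invertible P" and "coframe3 \<alpha> \<beta> \<gamma> (lincoord P) T"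
    and "\<And>k. k \<in> {\<alpha>, \<beta>, \<gamma>} \<Longrightarrow> lincoord P k = E k"
proof -
  define r where "r k = (\<chi> m. E k (axis m 1))" for k
  have E_r: "E i x = (\<Sum>m\<in>UNIV. r i $ m * x $ m)" for i x
    using clinear_coordinates[OF clinear, of i x] by (simp add: r_def)
  have "\<forall>i\<in>{\<alpha>, \<beta>, \<gamma>}. c i = 0" if sum_zero: "(\<Sum>i\<in>{\<alpha>, \<beta>, \<gamma>}. c i *s r i) = 0" for c
  proof
    fix j assume j: "j \<in> {\<alpha>, \<beta>, \<gamma>}"
    have "(\<Sum>i\<in>{\<alpha>, \<beta>, \<gamma>}. c i * E i x) = (\<Sum>m\<in>UNIV. (\<Sum>i\<in>{\<alpha>, \<beta>, \<gamma>}. c i *s r i) $ m * x $ m)"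
      for x
      by (simp add: E_r sum_distrib_left sum_distrib_right sum.swap[of _ "{\<alpha>, \<beta>, \<gamma>}"] mult.assoc)
    then have "(\<Sum>i\<in>{\<alpha>, \<beta>, \<gamma>}. c i * E i (T j)) = 0"
      by (simp add: sum_zero)
    then show "c j = 0"
      using j by (auto simp: sum_coframe)
  qed
  then show ?thesis
  proof (rule exists_invertible_with_rows)
    fix P :: "complex^'n^'n"
    assume inv: "invertible P" and rows: "\<And>i. i \<in> {\<alpha>, \<beta>, \<gamma>} \<Longrightarrow> P$i = r i"
    have coord: "lincoord P k = E k" if "k \<in> {\<alpha>, \<beta>, \<gamma>}" for k
      using lincoord_eq_clinear[OF clinear, of P k] rows[OF that] by (simp add: r_def)
    have "coframe3 \<alpha> \<beta> \<gamma> (lincoord P) T"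
      using distinct clinear_lincoord dual by (intro coframe3.intro) (simp_all add: coord)
    with inv show thesis using coord by (rule that)
  qed
qed

end

lemma integrable2_hom1_d2_decomposable:
  fixes eta :: "complex^'n \<Rightarrow> complex^'n \<Rightarrow> complex^'n \<Rightarrow> complex" and \<alpha> \<beta> \<gamma> :: 'n
  assumes hom: "form2_hom1 eta" and int: "integrable2 eta"
    and nz: "hom1_d2 eta u1 v1 w1 \<noteq> 0" and distinct: "distinct [\<alpha>, \<beta>, \<gamma>]"
  obtains E T where "coframe3 \<alpha> \<beta> \<gamma> E T"
    and "\<And>u v w. hom1_d2 eta u v w = wedge111 (E \<alpha>) (E \<beta>) (E \<gamma>) u v w"
proof -
  obtain p u0 v0 where "eta p u0 v0 \<noteq> 0"
    using nz unfolding hom1_d2_def by (metis add_0 diff_zero)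
  from integrable2_wedge31_zero[OF hom int this] obtain a b where lin: "clinear a" "clinear b"
    and eta_p: "\<And>u v. eta p u v = a u * b v - a v * b u"
    and wedge_a: "\<And>u1 u2 u3 u4. wedge31 (hom1_d2 eta) a u1 u2 u3 u4 = 0"
    and wedge_b: "\<And>u1 u2 u3 u4. wedge31 (hom1_d2 eta) b u1 u2 u3 u4 = 0"
    by metis
  obtain t s where dual: "a t = 1" "b t = 0" "a s = 0" "b s = 1"
    using wedge11_nonzero_dual[OF lin] \<open>eta p u0 v0 \<noteq> 0\<close> eta_p by metis
  define c where "c = hom1_d2 eta t s"
  have Om: "hom1_d2 eta u v w = wedge111 a b c u v w" for u v w
    unfolding c_def
    by (rule wedge31_zero_imp_wedge111[OF hom1_d2_swap12[OF hom] hom1_d2_swap23[OF hom]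
          wedge_a wedge_b dual])
  have c_dual: "c t = 0" "c s = 0"
    using hom1_d2_swap12[OF hom, of t t s] hom1_d2_swap23[OF hom, of t s t]
      hom1_d2_swap23[OF hom, of t s s]
    by (simp_all add: c_def)
  obtain z where "c z \<noteq> 0"
    using nz unfolding Om wedge111_def by (metis mult_zero_right diff_self add_0 diff_zero)
  define r where "r = (1 / c z) *s (z - a z *s t - b z *s s)"
  have r_dual: "a r = 0" "b r = 0" "c r = 1"
    using lin clinear_hom1_d2[OF hom, of t s] \<open>c z \<noteq> 0\<close> dual c_dual
    by (simp_all add: r_def c_def[symmetric] clinear_diff clinear_scale)
  define E where "E k = (if k = \<alpha> then a else if k = \<beta> then b else c)" for k
  define T where "T k = (if k = \<alpha> then t else if k = \<beta> then s else r)" for k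
  have "coframe3 \<alpha> \<beta> \<gamma> E T"
  proof (rule coframe3.intro)
    show "distinct [\<alpha>, \<beta>, \<gamma>]" by (fact distinct)
    show "clinear (E k)" for k
      using lin clinear_hom1_d2[OF hom, of t s] by (simp add: E_def c_def)
    show "E i (T j) = (if i = j then 1 else 0)" if "i \<in> {\<alpha>, \<beta>, \<gamma>}" "j \<in> {\<alpha>, \<beta>, \<gamma>}" for i j
      using that distinct dual c_dual r_dual by (auto simp: E_def T_def)
  qed
  moreover have "hom1_d2 eta u v w = wedge111 (E \<alpha>) (E \<beta>) (E \<gamma>) u v w" for u v w
    using distinct by (auto simp: Om E_def)
  ultimately show ?thesis by (rule that)
qed

lemma integrable2_lincoord_coframe:
  fixes eta :: "complex^'n \<Rightarrow> complex^'n \<Rightarrow> complex^'n \<Rightarrow> complex" and \<alpha> \<beta> \<gamma> :: 'n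
  assumes hom: "form2_hom1 eta" and int: "integrable2 eta"
    and nz: "hom1_d2 eta u1 v1 w1 \<noteq> 0" and distinct: "distinct [\<alpha>, \<beta>, \<gamma>]"
  obtains P T where "invertible P" and "coframe3 \<alpha> \<beta> \<gamma> (lincoord P) T"
    and "\<And>u v w. hom1_d2 eta u v w = wedge111 (lincoord P \<alpha>) (lincoord P \<beta>) (lincoord P \<gamma>) u v w"
proof -
  obtain E T where frame: "coframe3 \<alpha> \<beta> \<gamma> E T"
    and d: "\<And>u v w. hom1_d2 eta u v w = wedge111 (E \<alpha>) (E \<beta>) (E \<gamma>) u v w"
    by (rule integrable2_hom1_d2_decomposable[OF hom int nz distinct]) (rule that)
  obtain P where "invertible P" and "coframe3 \<alpha> \<beta> \<gamma> (lincoord P) T"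
    and "\<And>k. k \<in> {\<alpha>, \<beta>, \<gamma>} \<Longrightarrow> lincoord P k = E k"
    by (rule coframe3.exists_invertible_lincoord[OF frame]) (rule that)
  then show ?thesis
    using that by (simp add: d)
qed

theorem mainTheorem12:
  fixes eta :: "complex^'n \<Rightarrow> complex^'n \<Rightarrow> complex^'n \<Rightarrow> complex"
  assumes "CARD('n) \<ge> 4"
    and "form2_hom1 eta"
    and "integrable2 eta"
    and "\<exists>x u v w. ext_d2 eta x u v w \<noteq> 0"
  shows "\<exists>(P::complex^'n^'n) a b c.
     invertible P \<and> distinct [a, b, c] \<and>
     (\<forall>x u v w. ext_d2 eta x u v w =
        wedge111 (lincoord P a) (lincoord P b) (lincoord P c) u v w) \<and>
     (\<exists>B::'n \<Rightarrow> 'n \<Rightarrow> 'n \<Rightarrow> complex. \<forall>x u v. eta x u v =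
        (\<Sum>i\<in>{a,b,c}. \<Sum>j\<in>{a,b,c}.
           (\<Sum>k\<in>{a,b,c}. B i j k * lincoord P k x) * lincoord P i u * lincoord P j v)) \<and>
     (\<exists>Q::'n \<Rightarrow> 'n \<Rightarrow> 'n \<Rightarrow> complex. \<forall>x u v. eta x u v =
        lincoord P a x * (lincoord P b u * lincoord P c v - lincoord P b v * lincoord P c u)
        + ext_d1 (\<lambda>x' u'. \<Sum>j\<in>{a,b,c}.
             (\<Sum>k\<in>{a,b,c}. \<Sum>l\<in>{a,b,c}. Q j k l * lincoord P k x' * lincoord P l x')
             * lincoord P j u') x u v)"
proof -
  have "3 \<le> CARD('n)"
    using assms(1) by simp
  then obtain A :: "'n set" where "card A = 3"
    by (rule obtain_subset_with_card_n)
  then obtain \<alpha> \<beta> \<gamma> :: 'n where distinct: "distinct [\<alpha>, \<beta>, \<gamma>]"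
    by (auto simp: card_3_iff)
  from assms(4) obtain u1 v1 w1 where "hom1_d2 eta u1 v1 w1 \<noteq> 0"
    by (auto simp: ext_d2_form2_hom1[OF assms(2)])
  then obtain P T where "invertible P" and frame: "coframe3 \<alpha> \<beta> \<gamma> (lincoord P) T"
    and d: "\<And>u v w. hom1_d2 eta u v w = wedge111 (lincoord P \<alpha>) (lincoord P \<beta>) (lincoord P \<gamma>) u v w"
    by (rule integrable2_lincoord_coframe[OF assms(2,3) _ distinct]) (rule that)
  show ?thesis
  proof (rule exI[of _ P], rule exI[of _ \<alpha>], rule exI[of _ \<beta>], rule exI[of _ \<gamma>], intro conjI)
  qed (fact \<open>invertible P\<close> distinct
    | intro exI allI, rule coframe3.form2_hom1_coordinates[OF frame assms(2,3) d]
    | rule coframe3.form2_hom1_exact_remainder[OF frame assms(2,3) d]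
    | simp add: ext_d2_form2_hom1[OF assms(2)] d)+
qed

end
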